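(* Let $A\in\mathbb{R}^{m\times n}$ have full column rank, let $b\in\mathbb{R}^m$ be such that $Ax=b$ is consistent, and let $x^*$ be its (unique) solution. Let $G\in\mathbb{R}^{m\times m}$ be symmetric positive definite and put $\widehat G:=A^TGA$ (which is then symmetric positive definite). Let $\Omega$ be a random $n\times l$ matrix with some fixed distribution $\mathcal D$, and let $W:=\Omega(\Omega^T\widehat G\,\Omega)^{\dagger}\Omega^T$, where $\dagger$ denotes the Moore–Penrose pseudoinverse; assume $\mathbb{E}[W]$ exists. Let $\Omega_0,\Omega_1,\dots$ be i.i.d. copies of $\Omega$, let $x^0\in\mathbb{R}^n$ be deterministic, and define $$x^{k+1}=x^k+\Omega_k(\Omega_k^TA^TGA\Omega_k)^{\dagger}\Omega_k^TA^TG\,(b-Ax^k),\qquad k\ge 0,$$ and $e^k:=x^k-x^*$. Let $\rho:=1-\lambda_{\min}\big(\widehat G^{1/2}\,\mathbb{E}[W]\,\widehat G^{1/2}\big)$. Then for every $k\ge 0$, $$\mathbb{E}\big[\|e^{k+1}\|_{\widehat G}^2\big]\le \rho\,\mathbb{E}\big[\|e^{k}\|_{\widehat G}^2\big],\qquad\text{hence}\qquad \mathbb{E}\big[\|e^{k}\|_{\widehat G}^2\big]\le \rho^k\,\|e^0\|_{\widehat G}^2,$$ and $\rho<1$ whenever $\mathbb{E}[W]$ is positive definite.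
   Context: For a symmetric positive definite matrix $M$, $\|x\|_M:=\sqrt{x^TMx}$. $\lambda_{\min}(\cdot)$ denotes the smallest eigenvalue of a symmetric matrix. Expectations are taken over the random matrices $\Omega_0,\Omega_1,\dots$. *)

theory Defs
  imports "HOL-Analysis.Analysis" "HOL-Probability.Probability"
begin

definition sym_mat :: "real^'n^'n \<Rightarrow> bool" where
  "sym_mat M \<longleftrightarrow> transpose M = M"

definition spd :: "real^'n^'n \<Rightarrow> bool" where
  "spd M \<longleftrightarrow> sym_mat M \<and> (\<forall>x. x \<noteq> 0 \<longrightarrow> x \<bullet> (M *v x) > 0)"

definition spsd :: "real^'n^'n \<Rightarrow> bool" where
  "spsd M \<longleftrightarrow> sym_mat M \<and> (\<forall>x. x \<bullet> (M *v x) \<ge> 0)"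

definition sqnorm_M :: "real^'n^'n \<Rightarrow> real^'n \<Rightarrow> real" where
  "sqnorm_M M x = x \<bullet> (M *v x)"

definition pinv :: "real^'n^'m \<Rightarrow> real^'m^'n" where
  "pinv A = (THE X. A ** X ** A = A \<and> X ** A ** X = X \<and>
                    transpose (A ** X) = A ** X \<and> transpose (X ** A) = X ** A)"

definition eigenvalues :: "real^'n^'n \<Rightarrow> real set" where
  "eigenvalues M = {c. \<exists>v. v \<noteq> 0 \<and> M *v v = c *\<^sub>R v}"

definition lambda_min :: "real^'n^'n \<Rightarrow> real" where
  "lambda_min M = Min (eigenvalues M)"

definition mat_sqrt :: "real^'n^'n \<Rightarrow> real^'n^'n" where
  "mat_sqrt M = (THE S. spsd S \<and> S ** S = M)"

primrec sketch_iter ::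
  "real^'n^'m \<Rightarrow> real^'m \<Rightarrow> real^'m^'m \<Rightarrow> real^'n \<Rightarrow> (nat \<Rightarrow> real^'l^'n) \<Rightarrow> nat \<Rightarrow> real^'n" where
  "sketch_iter A b G x0 \<omega> 0 = x0"
| "sketch_iter A b G x0 \<omega> (Suc k) =
     (let xk = sketch_iter A b G x0 \<omega> k; Om = \<omega> k in
      xk + (Om ** pinv (transpose Om ** transpose A ** G ** A ** Om) ** transpose Om
              ** transpose A ** G) *v (b - A *v xk))"

end

theory Submission
  imports Defs
begin

text \<open>Write \<open>e = x - x\<^sup>*\<close> and \<open>Gh = A\<^sup>T G A\<close>. Since \<open>b = A x\<^sup>*\<close>, a step maps \<open>e\<close> to
  \<open>e - W Gh e\<close>, and the Penrose identities give \<open>W Gh W = W\<close>; so \<open>e \<mapsto> W Gh e\<close> is a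
  \<open>Gh\<close>-orthogonal projection and \<open>\<parallel>e\<parallel>\<^sup>2\<close> (in the \<open>Gh\<close>-norm) drops by exactly
  \<open>(Gh e)\<^sup>T W (Gh e)\<close>. Averaged over a fresh sketch the drop is \<open>(Gh e)\<^sup>T E[W] (Gh e)\<close>, which
  the Rayleigh bound for \<open>Gh\<^sup>1\<^sup>/\<^sup>2 E[W] Gh\<^sup>1\<^sup>/\<^sup>2\<close> turns into the factor \<open>\<rho>\<close>. As the sketches
  are i.i.d., the law of \<open>(\<Omega>\<^sub>0, \<Omega>\<^sub>1, \<dots>)\<close> is that of \<open>\<Omega>\<^sub>0\<close> times that of the shifted
  sequence, so conditioning on \<open>\<Omega>\<^sub>0\<close> propagates the one-step bound to every \<open>k\<close>. The spectral
  theorem for symmetric matrices, obtained by minimising the Rayleigh quotient on invariant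
  subspaces, supplies the pseudoinverse, the square root and \<open>\<lambda>\<^sub>m\<^sub>i\<^sub>n\<close>.\<close>

section \<open>Symmetric matrices and the spectral theorem\<close>

lemma inner_matrix_vector_transpose: "(x::real^'n) \<bullet> (A *v y) = (transpose A *v x) \<bullet> y"
  by (metis dot_lmul_matrix vector_transpose_matrix transpose_transpose inner_commute)

lemma sym_mat_inner_swap: "sym_mat M \<Longrightarrow> (x::real^'n) \<bullet> (M *v y) = (M *v x) \<bullet> y"
  by (simp add: sym_mat_def inner_matrix_vector_transpose)

lemma sym_matI:
  assumes "\<And>x y. (x::real^'n) \<bullet> (A *v y) = (A *v x) \<bullet> y"
  shows "sym_mat A"
  unfolding sym_mat_def matrix_eq
proof
  fix y
  have "x \<bullet> (transpose A *v y - A *v y) = 0" for x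
    using assms[of y x] by (simp add: inner_diff_right inner_matrix_vector_transpose inner_commute)
  from this[of "transpose A *v y - A *v y"] show "transpose A *v y = A *v y" by simp
qed

lemma sym_mat_diff: "sym_mat A \<Longrightarrow> sym_mat B \<Longrightarrow> sym_mat (A - B :: real^'n^'n)"
  by (simp add: sym_mat_def transpose_def vec_eq_iff)

lemma sym_mat_congruence:
  fixes C :: "real^'n^'m" and M :: "real^'m^'m"
  shows "sym_mat M \<Longrightarrow> sym_mat (transpose C ** M ** C)"
  by (simp add: sym_mat_def matrix_transpose_mul matrix_mul_assoc)

lemma inner_congruence:
  fixes x :: "real^'n" and C :: "real^'n^'m" and M :: "real^'m^'m"
  shows "x \<bullet> ((transpose C ** M ** C) *v x) = (C *v x) \<bullet> (M *v (C *v x))"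
proof -
  have "x \<bullet> ((transpose C ** M ** C) *v x) = x \<bullet> (transpose C *v (M *v (C *v x)))"
    by (simp only: matrix_vector_mul_assoc matrix_mul_assoc)
  also have "\<dots> = (C *v x) \<bullet> (M *v (C *v x))"
    using inner_matrix_vector_transpose[of x "transpose C" "M *v (C *v x)"]
    by (simp only: transpose_transpose)
  finally show ?thesis .
qed

lemma quadratic_nonneg_imp_linear_coeff_zero:
  fixes c d :: real
  assumes "\<And>t. 0 \<le> 2*t*c + t^2*d"
  shows "c = 0"
proof (rule ccontr)
  assume c: "c \<noteq> 0"
  define a where "a = \<bar>d\<bar> + 1"
  have pos: "a > 0" and ad: "\<bar>d\<bar> = a - 1" by (auto simp: a_def)
  define t where "t = - c / a"
  have "0 \<le> 2*t*c + t^2*d" by (rule assms)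
  also have "\<dots> \<le> 2*t*c + t^2*\<bar>d\<bar>" by (simp add: mult_left_mono)
  also have "\<dots> = c^2 * (- a - 1) / a^2"
    using pos unfolding t_def ad by (simp add: field_simps power2_eq_square)
  also have "\<dots> < 0"
    using c pos by (intro divide_neg_pos mult_pos_neg) auto
  finally show False by simp
qed

lemma inner_matrix_vector_add_scaleR:
  "(v + t *\<^sub>R w) \<bullet> ((M::real^'n^'n) *v (v + t *\<^sub>R w))
     = v \<bullet> (M *v v) + t * (v \<bullet> (M *v w)) + t * (w \<bullet> (M *v v)) + t^2 * (w \<bullet> (M *v w))"
  by (simp add: matrix_vector_right_distrib matrix_vector_mult_scaleR inner_add_left inner_add_right
      algebra_simps power2_eq_square)

lemma psd_null_vector:
  assumes "sym_mat S" and psd: "\<And>x. 0 \<le> (x::real^'n) \<bullet> (S *v x)"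
    and v: "v \<bullet> (S *v v) = 0"
  shows "S *v v = 0"
proof -
  let ?w = "S *v v"
  have "0 \<le> 2*t*(?w \<bullet> ?w) + t^2*(?w \<bullet> (S *v ?w))" for t
  proof -
    have "0 \<le> (v + t *\<^sub>R ?w) \<bullet> (S *v (v + t *\<^sub>R ?w))" by (rule psd)
    also have "v \<bullet> (S *v ?w) = ?w \<bullet> ?w" using sym_mat_inner_swap[OF assms(1)] by simp
    ultimately show ?thesis using v by (simp add: inner_matrix_vector_add_scaleR)
  qed
  then have "?w \<bullet> ?w = 0" by (rule quadratic_nonneg_imp_linear_coeff_zero)
  then show ?thesis by simp
qed

definition orthonormal_eigenbasis :: "real^'n^'n \<Rightarrow> (real^'n) set \<Rightarrow> bool" where
  "orthonormal_eigenbasis M B \<longleftrightarrow>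
     pairwise orthogonal B \<and> (\<forall>b\<in>B. norm b = 1 \<and> M *v b = (b \<bullet> (M *v b)) *\<^sub>R b)"

lemma rayleigh_minimizer_eigenvector:
  fixes M :: "real^'n^'n"
  assumes sym: "sym_mat M" and V: "subspace V" "\<forall>x\<in>V. M *v x \<in> V"
    and v: "v \<in> V" "v \<bullet> v = 1"
    and min: "\<And>x. x \<in> V \<Longrightarrow> (v \<bullet> (M *v v)) * (x \<bullet> x) \<le> x \<bullet> (M *v x)"
  shows "M *v v = (v \<bullet> (M *v v)) *\<^sub>R v"
proof -
  define l where "l = v \<bullet> (M *v v)"
  define w where "w = M *v v - l *\<^sub>R v"
  define r where "r = (\<lambda>x. x \<bullet> (M *v x) - l * (x \<bullet> x))"
  have wV: "w \<in> V" using V v unfolding w_def by (simp add: subspace_diff subspace_scale)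
  have "0 \<le> 2*t*(w \<bullet> w) + t^2 * r w" for t
  proof -
    have "v + t *\<^sub>R w \<in> V" using V(1) v(1) wV by (simp add: subspace_add subspace_scale)
    from min[OF this] have "0 \<le> r (v + t *\<^sub>R w)" unfolding r_def l_def by simp
    moreover have "v \<bullet> (M *v w) = w \<bullet> (M *v v)"
      using sym_mat_inner_swap[OF sym] inner_commute by metis
    moreover have vw: "v \<bullet> w = 0"
      using v(2) unfolding w_def l_def by (simp add: inner_diff_right)
    moreover have "w \<bullet> w = w \<bullet> (M *v v)"
      using vw unfolding w_def by (simp add: inner_diff_left inner_commute)
    ultimately show ?thesis
      using v(2) unfolding r_def l_def
      by (simp add: inner_matrix_vector_add_scaleR inner_add_left inner_add_right inner_commute
          algebra_simps power2_eq_square)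
  qed
  then have "w \<bullet> w = 0" by (rule quadratic_nonneg_imp_linear_coeff_zero)
  then show ?thesis by (simp add: w_def l_def)
qed

lemma invariant_subspace_unit_eigenvector:
  fixes M :: "real^'n^'n"
  assumes sym: "sym_mat M" and V: "subspace V" "\<forall>x\<in>V. M *v x \<in> V" and u: "u \<in> V" "u \<noteq> 0"
  obtains v where "v \<in> V" "norm v = 1" "M *v v = (v \<bullet> (M *v v)) *\<^sub>R v"
proof -
  let ?K = "V \<inter> sphere 0 1"
  let ?q = "\<lambda>x. x \<bullet> (M *v x)"
  have unit_in_K: "x /\<^sub>R norm x \<in> ?K" if "x \<in> V" "x \<noteq> 0" for x
    using that V(1) by (simp add: subspace_scale)
  have "compact (sphere 0 1 \<inter> V)"
    by (rule compact_Int_closed[OF compact_sphere closed_subspace[OF V(1)]])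
  then have "compact ?K" by (simp add: Int_commute)
  moreover have "?K \<noteq> {}" using unit_in_K[OF u] by blast
  moreover have "continuous_on ?K ?q"
    by (rule continuous_on_inner[OF continuous_on_id matrix_vector_mult_linear_continuous_on])
  ultimately have "\<exists>x\<in>?K. \<forall>y\<in>?K. ?q x \<le> ?q y" by (rule continuous_attains_inf)
  then obtain v where v: "v \<in> ?K" and vmin: "\<And>y. y \<in> ?K \<Longrightarrow> ?q v \<le> ?q y"
    by blast
  have vv: "v \<bullet> v = 1" using v by (simp add: dot_square_norm)
  have "?q v * (x \<bullet> x) \<le> ?q x" if "x \<in> V" for x
  proof (cases "x = 0")
    case False
    have "?q v \<le> ?q (x /\<^sub>R norm x)" using vmin unit_in_K[OF that False] by blast
    also have "\<dots> = ?q x / (x \<bullet> x)"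
      by (simp add: matrix_vector_mult_scaleR power2_eq_square dot_square_norm divide_inverse)
    finally show ?thesis using False by (simp add: pos_le_divide_eq)
  qed simp
  moreover have "v \<in> V" "norm v = 1" using v by simp_all
  ultimately show thesis
    using vv rayleigh_minimizer_eigenvector[OF sym V] that by blast
qed

lemma subspace_subset_span_insert_unit:
  assumes V: "subspace V" and v: "v \<in> V" "v \<bullet> v = 1"
    and B: "V \<inter> {y. orthogonal v y} \<subseteq> span B"
  shows "V \<subseteq> span (insert v B)"
proof
  fix x assume x: "x \<in> V"
  have "x - (v \<bullet> x) *\<^sub>R v \<in> V \<inter> {y. orthogonal v y}"
    using x v V by (simp add: orthogonal_def subspace_diff subspace_scale inner_diff_right)
  then have "x - (v \<bullet> x) *\<^sub>R v \<in> span (insert v B)"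
    using B by (meson span_mono subset_insertI subsetD)
  moreover have "(v \<bullet> x) *\<^sub>R v \<in> span (insert v B)" by (simp add: span_base span_mul)
  ultimately show "x \<in> span (insert v B)" using span_add by fastforce
qed

lemma invariant_subspace_orthonormal_eigenbasis:
  fixes M :: "real^'n^'n"
  assumes sym: "sym_mat M"
  shows "subspace V \<Longrightarrow> \<forall>x\<in>V. M *v x \<in> V \<Longrightarrow>
    \<exists>B. B \<subseteq> V \<and> orthonormal_eigenbasis M B \<and> V \<subseteq> span B"
proof (induction "dim V" arbitrary: V rule: less_induct)
  case less
  show ?case
  proof (cases "V \<subseteq> {0}")
    case True
    then show ?thesis by (intro exI[of _ "{}"]) (auto simp: orthonormal_eigenbasis_def)
  next
    case False
    then obtain u where "u \<in> V" "u \<noteq> 0" by auto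
    then obtain v where vV: "v \<in> V" and nv: "norm v = 1" and eig: "M *v v = (v \<bullet> (M *v v)) *\<^sub>R v"
      using invariant_subspace_unit_eigenvector[OF sym less.prems] by blast
    have vv: "v \<bullet> v = 1" using nv by (simp add: dot_square_norm)
    define V' where "V' = V \<inter> {y. orthogonal v y}"
    have sV': "subspace V'" unfolding V'_def
      by (rule subspace_inter[OF less.prems(1) subspace_orthogonal_to_vector])
    have iV': "\<forall>x\<in>V'. M *v x \<in> V'"
    proof
      fix x assume x: "x \<in> V'"
      have "v \<bullet> (M *v x) = (M *v v) \<bullet> x" by (rule sym_mat_inner_swap[OF sym])
      also have "\<dots> = 0" using x by (subst eig) (simp add: V'_def orthogonal_def)
      finally show "M *v x \<in> V'" using x less.prems by (auto simp: V'_def orthogonal_def)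
    qed
    have "v \<notin> V'" using vv by (simp add: V'_def orthogonal_def)
    then have "V' \<subset> V" using vV by (auto simp: V'_def)
    then have "dim V' < dim V"
      using dim_psubset span_eq_iff less.prems(1) sV' by metis
    from less.hyps[OF this sV' iV'] obtain B'
      where B': "B' \<subseteq> V'" "orthonormal_eigenbasis M B'" "V' \<subseteq> span B'"
      by blast
    show ?thesis
    proof (intro exI conjI)
      show "insert v B' \<subseteq> V" using B'(1) vV by (auto simp: V'_def)
      have "pairwise orthogonal (insert v B')"
        using B'(1,2) by (intro pairwise_orthogonal_insert) (auto simp: V'_def orthonormal_eigenbasis_def)
      then show "orthonormal_eigenbasis M (insert v B')"
        using B'(2) nv eig by (simp add: orthonormal_eigenbasis_def)
      show "V \<subseteq> span (insert v B')"
        using subspace_subset_span_insert_unit[OF less.prems(1) vV vv] B'(3) by (simp add: V'_def)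
    qed
  qed
qed

lemma sym_mat_orthonormal_eigenbasis:
  fixes M :: "real^'n^'n"
  assumes "sym_mat M"
  obtains B where "orthonormal_eigenbasis M B" "span B = UNIV"
  using invariant_subspace_orthonormal_eigenbasis[OF assms, of UNIV] by auto

lemma orthonormal_eigenbasis_finite: "orthonormal_eigenbasis M B \<Longrightarrow> finite B"
  unfolding orthonormal_eigenbasis_def using pairwise_orthogonal_imp_finite by blast

lemma orthonormal_eigenbasis_coeff:
  assumes "orthonormal_eigenbasis M B" "b \<in> B"
  shows "b \<bullet> (\<Sum>c\<in>B. a c *\<^sub>R c) = a b"
proof -
  have "b \<bullet> c = (if c = b then 1 else 0)" if "c \<in> B" for c
    using assms that unfolding orthonormal_eigenbasis_def pairwise_def orthogonal_def
    by (auto simp: dot_square_norm)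
  then have "b \<bullet> (\<Sum>c\<in>B. a c *\<^sub>R c) = (\<Sum>c\<in>B. if c = b then a c else 0)"
    by (auto simp: inner_sum_right intro: sum.cong)
  also have "\<dots> = a b" using orthonormal_eigenbasis_finite[OF assms(1)] assms(2) by simp
  finally show ?thesis .
qed

lemma orthonormal_eigenbasis_expand:
  assumes "orthonormal_eigenbasis M B" "span B = UNIV"
  shows "x = (\<Sum>b\<in>B. (b \<bullet> x) *\<^sub>R b)"
proof -
  let ?y = "x - (\<Sum>b\<in>B. (b \<bullet> x) *\<^sub>R b)"
  have "\<forall>b\<in>B. b \<bullet> ?y = 0"
    using orthonormal_eigenbasis_coeff[OF assms(1)] by (simp add: inner_diff_right)
  then have "orthogonal ?y z" if "z \<in> span B" for z
    using orthogonal_to_span[OF that, of ?y] by (simp add: orthogonal_def inner_commute)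
  then have "orthogonal ?y ?y" using assms(2) by simp
  then show ?thesis by (simp add: orthogonal_def)
qed

text \<open>\<open>spectral_fun B M f\<close> is \<open>f(M)\<close>, computed in the eigenbasis \<open>B\<close> of \<open>M\<close>.\<close>

definition spectral_fun :: "(real^'n) set \<Rightarrow> real^'n^'n \<Rightarrow> (real \<Rightarrow> real) \<Rightarrow> real^'n^'n" where
  "spectral_fun B M f = (\<chi> i j. \<Sum>b\<in>B. f (b \<bullet> (M *v b)) * b$i * b$j)"

lemma spectral_fun_apply:
  assumes "finite B"
  shows "spectral_fun B M f *v x = (\<Sum>b\<in>B. (f (b \<bullet> (M *v b)) * (b \<bullet> x)) *\<^sub>R b)"
  using assms
  by (simp add: spectral_fun_def vec_eq_iff matrix_vector_mult_def inner_vec_def sum_component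
      sum_distrib_left sum_distrib_right sum.swap[of _ B] mult_ac)

lemma spectral_fun_mult:
  assumes "orthonormal_eigenbasis M B"
  shows "spectral_fun B M f ** spectral_fun B M g = spectral_fun B M (\<lambda>t. f t * g t)"
  unfolding matrix_eq
proof
  fix x
  have fin: "finite B" using assms by (rule orthonormal_eigenbasis_finite)
  have "(spectral_fun B M f ** spectral_fun B M g) *v x = spectral_fun B M f *v (spectral_fun B M g *v x)"
    by (simp add: matrix_vector_mul_assoc)
  also have "\<dots> = (\<Sum>b\<in>B. (f (b \<bullet> (M *v b)) * (g (b \<bullet> (M *v b)) * (b \<bullet> x))) *\<^sub>R b)"
    using orthonormal_eigenbasis_coeff[OF assms] by (simp add: spectral_fun_apply[OF fin])
  also have "\<dots> = spectral_fun B M (\<lambda>t. f t * g t) *v x"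
    by (simp add: spectral_fun_apply[OF fin] mult.assoc)
  finally show "(spectral_fun B M f ** spectral_fun B M g) *v x = spectral_fun B M (\<lambda>t. f t * g t) *v x" .
qed

lemma spectral_fun_inner:
  assumes "orthonormal_eigenbasis M B"
  shows "x \<bullet> (spectral_fun B M f *v y) = (\<Sum>b\<in>B. f (b \<bullet> (M *v b)) * (b \<bullet> x) * (b \<bullet> y))"
  by (simp add: spectral_fun_apply[OF orthonormal_eigenbasis_finite[OF assms]] inner_sum_right
      inner_commute mult_ac)

lemma spectral_fun_sym:
  assumes "orthonormal_eigenbasis M B"
  shows "sym_mat (spectral_fun B M f)"
  by (rule sym_matI) (simp add: inner_commute[of "spectral_fun B M f *v _"] spectral_fun_inner[OF assms] mult_ac)

lemma spectral_fun_psd: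
  assumes "orthonormal_eigenbasis M B" "\<And>b. b \<in> B \<Longrightarrow> f (b \<bullet> (M *v b)) \<ge> 0"
  shows "spsd (spectral_fun B M f)"
  unfolding spsd_def spectral_fun_inner[OF assms(1)]
  using assms spectral_fun_sym by (auto intro!: sum_nonneg simp: mult.assoc)

lemma spectral_fun_id:
  assumes "orthonormal_eigenbasis M B" "span B = UNIV"
  shows "spectral_fun B M (\<lambda>t. t) = M"
  unfolding matrix_eq
proof
  fix x
  have "M *v x = M *v (\<Sum>b\<in>B. (b \<bullet> x) *\<^sub>R b)" using orthonormal_eigenbasis_expand[OF assms] by metis
  also have "\<dots> = (\<Sum>b\<in>B. (b \<bullet> x) *\<^sub>R (M *v b))"
    by (simp add: linear_sum[OF matrix_vector_mul_linear] matrix_vector_mult_scaleR)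
  also have "\<dots> = (\<Sum>b\<in>B. ((b \<bullet> (M *v b)) * (b \<bullet> x)) *\<^sub>R b)"
    using assms(1) unfolding orthonormal_eigenbasis_def
    by (intro sum.cong refl) (metis scaleR_scaleR mult.commute)
  also have "\<dots> = spectral_fun B M (\<lambda>t. t) *v x"
    by (simp add: spectral_fun_apply[OF orthonormal_eigenbasis_finite[OF assms(1)]])
  finally show "spectral_fun B M (\<lambda>t. t) *v x = M *v x" by simp
qed

lemma spectral_fun_cong:
  assumes "\<And>b. b \<in> B \<Longrightarrow> f (b \<bullet> (M *v b)) = g (b \<bullet> (M *v b))"
  shows "spectral_fun B M f = spectral_fun B M g"
  unfolding spectral_fun_def using assms by (simp add: vec_eq_iff)

section \<open>Pseudoinverse, square root and smallest eigenvalue\<close>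

definition penrose :: "real^'n^'m \<Rightarrow> real^'m^'n \<Rightarrow> bool" where
  "penrose A X \<longleftrightarrow> A ** X ** A = A \<and> X ** A ** X = X \<and>
                    transpose (A ** X) = A ** X \<and> transpose (X ** A) = X ** A"

lemma penrose_unique:
  assumes X: "penrose A X" and Y: "penrose A Y"
  shows "X = Y"
proof -
  have X1: "A ** X ** A = A" and X2: "X ** A ** X = X" and X3: "transpose (A ** X) = A ** X"
    and X4: "transpose (X ** A) = X ** A" using X by (auto simp: penrose_def)
  have Y1: "A ** Y ** A = A" and Y2: "Y ** A ** Y = Y" and Y3: "transpose (A ** Y) = A ** Y"
    and Y4: "transpose (Y ** A) = Y ** A" using Y by (auto simp: penrose_def)
  have "X = X ** transpose (A ** X)" using X2 X3 by (simp add: matrix_mul_assoc)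
  also have "\<dots> = X ** transpose X ** transpose (A ** Y ** A)"
    using Y1 by (simp add: matrix_transpose_mul matrix_mul_assoc)
  also have "\<dots> = X ** transpose (A ** X) ** transpose (A ** Y)"
    by (simp add: matrix_transpose_mul matrix_mul_assoc)
  also have "\<dots> = X ** A ** Y" using X2 X3 Y3 by (simp add: matrix_mul_assoc)
  finally have XY: "X = X ** A ** Y" .
  have "Y = transpose (Y ** A) ** Y" using Y2 Y4 by simp
  also have "\<dots> = transpose (A ** X ** A) ** transpose Y ** Y"
    using X1 by (simp add: matrix_transpose_mul)
  also have "\<dots> = transpose (X ** A) ** transpose (Y ** A) ** Y"
    by (simp add: matrix_transpose_mul matrix_mul_assoc)
  also have "\<dots> = X ** A ** (Y ** A ** Y)" using X4 Y4 by (simp add: matrix_mul_assoc)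
  also have "\<dots> = X ** A ** Y" using Y2 by simp
  finally show ?thesis using XY by simp
qed

lemma pinv_eqI: "penrose A X \<Longrightarrow> pinv A = X"
  unfolding pinv_def by (rule the_equality) (auto simp: penrose_def[symmetric] intro: penrose_unique)

lemma penrose_spectral_fun_inverse:
  assumes B: "orthonormal_eigenbasis N B" "span B = UNIV"
  shows "penrose N (spectral_fun B N inverse)"
proof -
  let ?X = "spectral_fun B N inverse"
  have N: "spectral_fun B N (\<lambda>t. t) = N" by (rule spectral_fun_id[OF B])
  have NX: "N ** ?X = spectral_fun B N (\<lambda>t. t * inverse t)"
    using spectral_fun_mult[OF B(1), of "\<lambda>t. t" inverse] unfolding N .
  have XN: "?X ** N = spectral_fun B N (\<lambda>t. inverse t * t)"
    using spectral_fun_mult[OF B(1), of inverse "\<lambda>t. t"] unfolding N .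
  have "N ** ?X ** N = spectral_fun B N (\<lambda>t. t * inverse t * t)"
    using spectral_fun_mult[OF B(1), of "\<lambda>t. t * inverse t" "\<lambda>t. t"] unfolding N NX .
  also have "(\<lambda>t::real. t * inverse t * t) = (\<lambda>t. t)"
    by (rule ext) (metis mult_zero_left right_inverse mult_1_left)
  finally have 1: "N ** ?X ** N = N" using N by simp
  have "?X ** N ** ?X = spectral_fun B N (\<lambda>t. inverse t * t * inverse t)"
    using spectral_fun_mult[OF B(1), of "\<lambda>t. inverse t * t" inverse] unfolding XN .
  also have "(\<lambda>t::real. inverse t * t * inverse t) = inverse"
    by (rule ext) (metis inverse_zero mult_zero_right left_inverse mult_1_left)
  finally have 2: "?X ** N ** ?X = ?X" .
  show ?thesis
    unfolding penrose_def using 1 2 spectral_fun_sym[OF B(1)] by (simp add: NX XN sym_mat_def)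
qed

lemma pinv_sym_mat:
  fixes N :: "real^'n^'n"
  assumes "sym_mat N"
  shows "pinv N ** N ** pinv N = pinv N" "sym_mat (pinv N)" "spsd N \<Longrightarrow> spsd (pinv N)"
proof -
  obtain B where B: "orthonormal_eigenbasis N B" "span B = UNIV"
    using sym_mat_orthonormal_eigenbasis[OF assms] by blast
  have X: "penrose N (spectral_fun B N inverse)" by (rule penrose_spectral_fun_inverse[OF B])
  then have pinv: "pinv N = spectral_fun B N inverse" by (rule pinv_eqI)
  show "pinv N ** N ** pinv N = pinv N" using X unfolding pinv penrose_def by simp
  show "sym_mat (pinv N)" unfolding pinv by (rule spectral_fun_sym[OF B(1)])
  show "spsd (pinv N)" if "spsd N"
    using that unfolding pinv by (intro spectral_fun_psd[OF B(1)]) (simp add: spsd_def)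
qed

lemma spsd_sqrt_unique:
  fixes S R :: "real^'n^'n"
  assumes S: "spsd S" and R: "spsd R" and eq: "S ** S = R ** R"
  shows "S = R"
proof -
  define D where "D = S - R"
  have symS: "sym_mat S" and symR: "sym_mat R" using S R by (simp_all add: spsd_def)
  have symD: "sym_mat D" unfolding D_def by (rule sym_mat_diff[OF symS symR])
  obtain B where B: "orthonormal_eigenbasis D B" "span B = UNIV"
    using sym_mat_orthonormal_eigenbasis[OF symD] by blast
  have anticomm: "(S + R) *v (D *v x) + D *v ((S + R) *v x) = 0" for x
  proof -
    have "S *v (S *v x) = R *v (R *v x)" using eq by (simp add: matrix_vector_mul_assoc)
    then show ?thesis unfolding D_def
      by (simp add: matrix_vector_mult_add_rdistrib matrix_vector_mult_diff_rdistrib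
          matrix_vector_right_distrib matrix_vector_mult_diff_distrib algebra_simps)
  qed
  have "b \<bullet> (D *v b) = 0" if b: "b \<in> B" for b
  proof (rule ccontr)
    define mu where "mu = b \<bullet> (D *v b)"
    assume "b \<bullet> (D *v b) \<noteq> 0"
    then have mu: "mu \<noteq> 0" by (simp add: mu_def)
    have Db: "D *v b = mu *\<^sub>R b" and nb: "norm b = 1"
      using B(1) b by (simp_all add: orthonormal_eigenbasis_def mu_def)
    have "0 = b \<bullet> ((S + R) *v (D *v b)) + (D *v b) \<bullet> ((S + R) *v b)"
      using anticomm[of b] sym_mat_inner_swap[OF symD] by (metis inner_add_right inner_zero_right)
    also have "\<dots> = 2 * mu * (b \<bullet> (S *v b) + b \<bullet> (R *v b))"
      unfolding Db by (simp add: matrix_vector_mult_scaleR matrix_vector_mult_add_rdistrib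
          inner_add_right algebra_simps)
    finally have "b \<bullet> (S *v b) + b \<bullet> (R *v b) = 0" using mu by simp
    moreover have "0 \<le> b \<bullet> (S *v b)" "0 \<le> b \<bullet> (R *v b)" using S R by (simp_all add: spsd_def)
    ultimately have "b \<bullet> (S *v b) = 0" "b \<bullet> (R *v b) = 0" by linarith+
    then have "S *v b = 0" "R *v b = 0"
      using psd_null_vector[OF symS] psd_null_vector[OF symR] S R by (simp_all add: spsd_def)
    then have "mu *\<^sub>R b = 0" using Db by (simp add: D_def matrix_vector_mult_diff_rdistrib)
    then show False using mu nb by auto
  qed
  then have "D = spectral_fun B D (\<lambda>_. 0)"
    using spectral_fun_id[OF B] spectral_fun_cong[of B "\<lambda>t. t" D "\<lambda>_. 0"] by simp
  then show ?thesis by (simp add: spectral_fun_def D_def vec_eq_iff)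
qed

lemma mat_sqrt:
  fixes M :: "real^'n^'n"
  assumes "spsd M"
  shows "spsd (mat_sqrt M)" "mat_sqrt M ** mat_sqrt M = M"
proof -
  obtain B where B: "orthonormal_eigenbasis M B" "span B = UNIV"
    using sym_mat_orthonormal_eigenbasis assms spsd_def by blast
  let ?S = "spectral_fun B M sqrt"
  have nn: "\<And>b. b \<in> B \<Longrightarrow> 0 \<le> b \<bullet> (M *v b)" using assms by (simp add: spsd_def)
  have S: "spsd ?S" using spectral_fun_psd[OF B(1)] nn by simp
  have "?S ** ?S = spectral_fun B M (\<lambda>t. sqrt t * sqrt t)" by (rule spectral_fun_mult[OF B(1)])
  also have "\<dots> = spectral_fun B M (\<lambda>t. t)" by (rule spectral_fun_cong) (simp add: nn)
  finally have SS: "?S ** ?S = M" using spectral_fun_id[OF B] by simp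
  have "mat_sqrt M = ?S"
    unfolding mat_sqrt_def
  proof (rule the_equality)
    show "\<And>R. spsd R \<and> R ** R = M \<Longrightarrow> R = ?S" using S SS spsd_sqrt_unique by metis
  qed (use S SS in simp)
  then show "spsd (mat_sqrt M)" "mat_sqrt M ** mat_sqrt M = M" using S SS by simp_all
qed

lemma eigenvalues_orthonormal_eigenbasis:
  fixes T :: "real^'n^'n"
  assumes sym: "sym_mat T" and B: "orthonormal_eigenbasis T B" "span B = UNIV"
  shows "eigenvalues T = (\<lambda>b. b \<bullet> (T *v b)) ` B"
proof
  have "b \<noteq> 0" "T *v b = (b \<bullet> (T *v b)) *\<^sub>R b" if "b \<in> B" for b
    using B(1) that by (auto simp: orthonormal_eigenbasis_def)
  then show "(\<lambda>b. b \<bullet> (T *v b)) ` B \<subseteq> eigenvalues T" unfolding eigenvalues_def by blast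
  show "eigenvalues T \<subseteq> (\<lambda>b. b \<bullet> (T *v b)) ` B"
  proof
    fix c assume "c \<in> eigenvalues T"
    then obtain v where v: "v \<noteq> 0" "T *v v = c *\<^sub>R v" unfolding eigenvalues_def by blast
    obtain b where b: "b \<in> B" "b \<bullet> v \<noteq> 0"
      using orthonormal_eigenbasis_expand[OF B, of v] v(1) by (metis (no_types, lifting) scaleR_zero_left sum.neutral)
    have "c * (b \<bullet> v) = (T *v b) \<bullet> v" using v(2) sym_mat_inner_swap[OF sym] by (metis inner_scaleR_right)
    also have "\<dots> = (b \<bullet> (T *v b)) * (b \<bullet> v)"
      using B(1) b(1) unfolding orthonormal_eigenbasis_def by (metis inner_scaleR_left)
    finally show "c \<in> (\<lambda>b. b \<bullet> (T *v b)) ` B" using b by auto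
  qed
qed

lemma sym_mat_lambda_min:
  fixes T :: "real^'n^'n"
  assumes sym: "sym_mat T"
  shows lambda_min_in_eigenvalues: "lambda_min T \<in> eigenvalues T"
    and lambda_min_le_rayleigh: "lambda_min T * (x \<bullet> x) \<le> x \<bullet> (T *v x)"
proof -
  obtain B where B: "orthonormal_eigenbasis T B" "span B = UNIV"
    using sym_mat_orthonormal_eigenbasis[OF sym] by blast
  have fin: "finite B" using B(1) by (rule orthonormal_eigenbasis_finite)
  have "B \<noteq> {}"
  proof
    assume "B = {}"
    then have "(UNIV :: (real^'n) set) = {0}" using B(2) by simp
    moreover have "(axis undefined 1 :: real^'n) \<noteq> 0" by (simp add: axis_eq_0_iff)
    ultimately show False by blast
  qed
  then have lm: "lambda_min T \<in> (\<lambda>b. b \<bullet> (T *v b)) ` B" "\<And>b. b \<in> B \<Longrightarrow> lambda_min T \<le> b \<bullet> (T *v b)"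
    unfolding lambda_min_def eigenvalues_orthonormal_eigenbasis[OF sym B] using fin by simp_all
  then show "lambda_min T \<in> eigenvalues T" using eigenvalues_orthonormal_eigenbasis[OF sym B] by simp
  have "x \<bullet> x = x \<bullet> (\<Sum>b\<in>B. (b \<bullet> x) *\<^sub>R b)"
    using orthonormal_eigenbasis_expand[OF B, of x] by simp
  then have "x \<bullet> x = (\<Sum>b\<in>B. (b \<bullet> x) * (b \<bullet> x))"
    by (simp add: inner_sum_right inner_commute)
  then have "lambda_min T * (x \<bullet> x) = (\<Sum>b\<in>B. lambda_min T * (b \<bullet> x) * (b \<bullet> x))"
    by (simp add: sum_distrib_left mult.assoc)
  also have "\<dots> \<le> (\<Sum>b\<in>B. (b \<bullet> (T *v b)) * (b \<bullet> x) * (b \<bullet> x))"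
    using lm(2) by (intro sum_mono) (simp add: mult.assoc mult_right_mono)
  also have "\<dots> = x \<bullet> (T *v x)"
    using spectral_fun_inner[OF B(1), of x "\<lambda>t. t" x] spectral_fun_id[OF B] by simp
  finally show "lambda_min T * (x \<bullet> x) \<le> x \<bullet> (T *v x)" .
qed

lemma spd_lambda_min_pos:
  fixes T :: "real^'n^'n"
  assumes "spd T"
  shows "0 < lambda_min T"
proof -
  obtain v where v: "v \<noteq> 0" "T *v v = lambda_min T *\<^sub>R v"
    using lambda_min_in_eigenvalues assms unfolding spd_def eigenvalues_def by blast
  have "0 < v \<bullet> (T *v v)" using assms v(1) by (simp add: spd_def)
  then have "0 < lambda_min T * (v \<bullet> v)" using v(2) by simp
  moreover have "0 < v \<bullet> v" using v(1) by simp
  ultimately show ?thesis by (simp add: zero_less_mult_iff)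
qed

section \<open>Measurability and integrals of matrices\<close>

lemma continuous_on_matrix_vector_mult:
  "continuous_on UNIV (\<lambda>p::(real^'n^'m) \<times> (real^'n). fst p *v snd p)"
proof -
  have "(\<lambda>p::(real^'n^'m) \<times> (real^'n). fst p *v snd p)
      = (\<lambda>p. \<chi> i. \<Sum>j\<in>UNIV. fst p $ i $ j * snd p $ j)"
    by (simp add: matrix_vector_mult_def)
  then show ?thesis
    by (simp only:) (intro continuous_on_vec_lambda continuous_on_sum continuous_on_mult
        continuous_on_compose2[OF bounded_linear.continuous_on[OF bounded_linear_vec_nth]]
        continuous_on_fst continuous_on_snd continuous_on_id; auto)
qed

lemma borel_measurable_matrix_vector_mult[measurable]:
  fixes f :: "'a \<Rightarrow> real^'n^'m" and g :: "'a \<Rightarrow> real^'n"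
  assumes "f \<in> borel_measurable M" "g \<in> borel_measurable M"
  shows "(\<lambda>x. f x *v g x) \<in> borel_measurable M"
  by (rule borel_measurable_continuous_Pair[OF assms continuous_on_matrix_vector_mult])

lemma bounded_linear_quadratic_form: "bounded_linear (\<lambda>W::real^'n^'n. u \<bullet> (W *v u))"
proof -
  have "linear (\<lambda>W::real^'n^'n. u \<bullet> (W *v u))"
    by (rule linearI)
      (simp_all add: matrix_vector_mult_add_rdistrib inner_add_right scaleR_matrix_vector_assoc[symmetric])
  then show ?thesis by (simp add: linear_conv_bounded_linear)
qed

lemma bounded_linear_transpose: "bounded_linear (transpose :: real^'n^'m \<Rightarrow> real^'m^'n)"
proof -
  have "linear (transpose :: real^'n^'m \<Rightarrow> real^'m^'n)"
    by (rule linearI) (simp_all add: transpose_def vec_eq_iff)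
  then show ?thesis by (simp add: linear_conv_bounded_linear)
qed

lemma sym_mat_integral:
  fixes F :: "'a \<Rightarrow> real^'n^'n"
  assumes F: "integrable D F" and sym: "\<And>x. sym_mat (F x)"
  shows "sym_mat (\<integral>x. F x \<partial>D)"
proof -
  have "transpose (\<integral>x. F x \<partial>D) = (\<integral>x. transpose (F x) \<partial>D)"
    by (rule integral_bounded_linear[OF bounded_linear_transpose F, symmetric])
  also have "\<dots> = (\<integral>x. F x \<partial>D)" using sym by (simp add: sym_mat_def)
  finally show ?thesis by (simp add: sym_mat_def)
qed

section \<open>Random iteration driven by an i.i.d. sequence\<close>

primrec random_iter :: "('a \<Rightarrow> 'b \<Rightarrow> 'b) \<Rightarrow> 'b \<Rightarrow> (nat \<Rightarrow> 'a) \<Rightarrow> nat \<Rightarrow> 'b" where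
  "random_iter f x \<omega> 0 = x"
| "random_iter f x \<omega> (Suc k) = f (\<omega> k) (random_iter f x \<omega> k)"

lemma random_iter_case_nat:
  "random_iter f x (case_nat a \<omega>) (Suc k) = random_iter f (f a x) \<omega> k"
  by (induction k) simp_all

lemma measurable_random_iter:
  fixes f :: "'a \<Rightarrow> 'b::topological_space \<Rightarrow> 'b"
  assumes f: "(\<lambda>p. f (fst p) (snd p)) \<in> borel_measurable (D \<Otimes>\<^sub>M borel)"
  shows "(\<lambda>\<omega>. random_iter f x \<omega> k) \<in> borel_measurable (PiM UNIV (\<lambda>_. D))"
proof (induction k)
  case (Suc k)
  have "(\<lambda>\<omega>. (\<omega> k, random_iter f x \<omega> k)) \<in> PiM UNIV (\<lambda>_. D) \<rightarrow>\<^sub>M D \<Otimes>\<^sub>M borel"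
    using Suc by (intro measurable_Pair measurable_component_singleton) simp_all
  from measurable_compose[OF this f] show ?case by simp
qed simp

text \<open>The i.i.d. sequence \<open>(\<Omega>\<^sub>0, \<Omega>\<^sub>1, \<dots>)\<close> is distributed as \<open>\<Omega>\<^sub>0\<close> paired with an independent
  copy of the whole sequence, which is the conditioning on the first sketch.\<close>

lemma integral_PiM_case_nat:
  fixes D :: "'a measure" and f :: "(nat \<Rightarrow> 'a) \<Rightarrow> real"
  assumes D: "prob_space D"
    and f: "f \<in> borel_measurable (PiM UNIV (\<lambda>_. D))"
    and bounded: "\<And>\<omega>. \<bar>f \<omega>\<bar> \<le> c"
  shows "integrable D (\<lambda>a. \<integral>\<omega>. f (case_nat a \<omega>) \<partial>PiM UNIV (\<lambda>_. D))"
    and "(\<integral>\<omega>. f \<omega> \<partial>PiM UNIV (\<lambda>_. D)) = (\<integral>a. (\<integral>\<omega>. f (case_nat a \<omega>) \<partial>PiM UNIV (\<lambda>_. D)) \<partial>D)"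
proof -
  interpret S: sequence_space D
    unfolding sequence_space_def by (rule product_prob_spaceI) (rule D)
  let ?P = "PiM (UNIV::nat set) (\<lambda>_. D)"
  interpret PP: pair_prob_space D ?P
    by (simp add: pair_prob_space_def pair_sigma_finite_def D S.prob_space_axioms
        prob_space_imp_sigma_finite)
  have shift: "(\<lambda>(a, \<omega>). case_nat a \<omega>) \<in> D \<Otimes>\<^sub>M ?P \<rightarrow>\<^sub>M ?P"
    by measurable
  have fs: "(\<lambda>z. f (case_nat (fst z) (snd z))) \<in> borel_measurable (D \<Otimes>\<^sub>M ?P)"
    using measurable_comp[OF shift f] by (simp add: comp_def split_beta)
  have int: "integrable (D \<Otimes>\<^sub>M ?P) (\<lambda>z. f (case_nat (fst z) (snd z)))"
    by (rule PP.P.integrable_const_bound[of _ c]) (use fs bounded in auto)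
  show "integrable D (\<lambda>a. \<integral>\<omega>. f (case_nat a \<omega>) \<partial>?P)"
    using PP.integrable_fst'[OF int] by simp
  have "(\<integral>\<omega>. f \<omega> \<partial>?P) = (\<integral>\<omega>. f \<omega> \<partial>distr (D \<Otimes>\<^sub>M ?P) ?P (\<lambda>(a, \<omega>). case_nat a \<omega>))"
    using S.PiM_iter by simp
  also have "\<dots> = (\<integral>z. f (case_nat (fst z) (snd z)) \<partial>(D \<Otimes>\<^sub>M ?P))"
    by (subst integral_distr[OF shift f]) (simp add: split_beta)
  also have "\<dots> = (\<integral>a. (\<integral>\<omega>. f (case_nat a \<omega>) \<partial>?P) \<partial>D)"
    using PP.integral_fst'[OF int] by simp
  finally show "(\<integral>\<omega>. f \<omega> \<partial>?P) = (\<integral>a. (\<integral>\<omega>. f (case_nat a \<omega>) \<partial>?P) \<partial>D)" .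
qed

lemma random_iter_expectation_contracts:
  fixes D :: "'a measure" and f :: "'a \<Rightarrow> 'b::topological_space \<Rightarrow> 'b" and V :: "'b \<Rightarrow> real"
  assumes D: "prob_space D"
    and f: "(\<lambda>p. f (fst p) (snd p)) \<in> borel_measurable (D \<Otimes>\<^sub>M borel)"
    and V: "V \<in> borel_measurable borel"
    and V_nonneg: "\<And>x. 0 \<le> V x"
    and V_decr: "\<And>a x. V (f a x) \<le> V x"
    and step_int: "\<And>x. integrable D (\<lambda>a. V (f a x))"
    and step: "\<And>x. (\<integral>a. V (f a x) \<partial>D) \<le> \<rho> * V x"
    and \<rho>: "0 \<le> \<rho>"
  defines "P \<equiv> PiM UNIV (\<lambda>_. D)"
  shows "(\<integral>\<omega>. V (random_iter f x \<omega> (Suc k)) \<partial>P) \<le> \<rho> * (\<integral>\<omega>. V (random_iter f x \<omega> k) \<partial>P)"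
    and "(\<integral>\<omega>. V (random_iter f x \<omega> k) \<partial>P) \<le> \<rho> ^ k * V x"
proof -
  interpret P: prob_space P unfolding P_def by (rule prob_space_PiM[OF D])
  define E where "E k x = (\<integral>\<omega>. V (random_iter f x \<omega> k) \<partial>P)" for k x
  have E0: "E 0 x = V x" for x
    by (simp add: E_def P.prob_space)
  have "V (random_iter f x \<omega> k) \<le> V x" for x \<omega> k
  proof (induction k)
    case (Suc k)
    then show ?case using V_decr[of "\<omega> k" "random_iter f x \<omega> k"] by simp
  qed simp
  then have bounded: "\<bar>V (random_iter f x \<omega> k)\<bar> \<le> V x" for x \<omega> k
    using V_nonneg by (simp add: abs_le_iff)
  have "(\<lambda>\<omega>. V (random_iter f x \<omega> k)) \<in> borel_measurable P" for x k
    unfolding P_def using measurable_compose[OF measurable_random_iter[OF f] V] .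
  note first_step = integral_PiM_case_nat[OF D this[unfolded P_def] bounded, of x "Suc k" for x k]
  have E_int: "integrable D (\<lambda>a. E k (f a x))"
    and E_Suc: "E (Suc k) x = (\<integral>a. E k (f a x) \<partial>D)" for k x
    using first_step unfolding random_iter_case_nat by (simp_all add: E_def P_def)
  have "E (Suc k) x \<le> \<rho> * E k x" for k x
  proof (induction k arbitrary: x)
    case 0
    then show ?case using step by (simp add: E_Suc E0)
  next
    case (Suc k)
    have "E (Suc (Suc k)) x \<le> (\<integral>a. \<rho> * E k (f a x) \<partial>D)"
      unfolding E_Suc[of "Suc k"] using Suc.IH E_int by (intro integral_mono integrable_mult_right)
    also have "\<dots> = \<rho> * E (Suc k) x" by (simp add: E_Suc)
    finally show ?case .
  qed
  then show "(\<integral>\<omega>. V (random_iter f x \<omega> (Suc k)) \<partial>P) \<le> \<rho> * (\<integral>\<omega>. V (random_iter f x \<omega> k) \<partial>P)"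
    by (simp add: E_def)
  have "E k x \<le> \<rho> ^ k * V x" for k x
  proof (induction k arbitrary: x)
    case (Suc k)
    have "E (Suc k) x \<le> (\<integral>a. \<rho> ^ k * V (f a x) \<partial>D)"
      unfolding E_Suc using Suc.IH E_int step_int by (intro integral_mono integrable_mult_right)
    also have "\<dots> = \<rho> ^ k * (\<integral>a. V (f a x) \<partial>D)" by simp
    also have "\<dots> \<le> \<rho> ^ k * (\<rho> * V x)"
      using step \<rho> by (intro mult_left_mono) simp_all
    finally show ?case by (simp add: mult_ac)
  qed (simp add: E0)
  then show "(\<integral>\<omega>. V (random_iter f x \<omega> k) \<partial>P) \<le> \<rho> ^ k * V x" by (simp add: E_def)
qed

section \<open>The sketch-and-project step\<close>

lemma spd_imp_spsd: "spd M \<Longrightarrow> spsd M"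
  unfolding spd_def spsd_def by (metis inner_zero_left order_refl less_imp_le)

lemma spd_congruence:
  fixes M :: "real^'m^'m" and C :: "real^'n^'m"
  assumes "spd M" "inj ((*v) C)"
  shows "spd (transpose C ** M ** C)"
proof -
  have "C *v x \<noteq> 0" if "x \<noteq> 0" for x
    using assms(2) that by (metis injD matrix_vector_mult_0_right)
  then show ?thesis
    using assms(1) by (simp add: spd_def sym_mat_congruence inner_congruence)
qed

lemma spsd_congruence:
  fixes M :: "real^'m^'m" and C :: "real^'n^'m"
  assumes "spsd M"
  shows "spsd (transpose C ** M ** C)"
  using assms by (simp add: spsd_def sym_mat_congruence inner_congruence)

lemma mat_sqrt_sym:
  assumes "spsd M"
  shows "transpose (mat_sqrt M) = mat_sqrt M"
  using mat_sqrt(1)[OF assms] by (simp add: spsd_def sym_mat_def)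

lemma spd_mat_sqrt_congruence:
  fixes M E :: "real^'n^'n"
  assumes "spd M" "spd E"
  shows "spd (mat_sqrt M ** E ** mat_sqrt M)"
proof -
  have M: "spsd M" using assms(1) by (rule spd_imp_spsd)
  have "inj ((*v) (mat_sqrt M))"
  proof (rule injI)
    fix x y assume "mat_sqrt M *v x = mat_sqrt M *v y"
    then have "M *v (x - y) = 0"
      using mat_sqrt(2)[OF M] by (metis matrix_vector_mul_assoc matrix_vector_mult_diff_distrib right_minus_eq)
    then show "x = y" using assms(1) unfolding spd_def by (metis inner_zero_right less_irrefl right_minus_eq)
  qed
  from spd_congruence[OF assms(2) this] show ?thesis by (simp add: mat_sqrt_sym[OF M])
qed

lemma rayleigh_mat_sqrt_congruence:
  fixes M E :: "real^'n^'n"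
  assumes M: "spsd M" and E: "sym_mat E"
  shows "lambda_min (mat_sqrt M ** E ** mat_sqrt M) * sqnorm_M M e \<le> (M *v e) \<bullet> (E *v (M *v e))"
proof -
  let ?S = "mat_sqrt M"
  have S: "transpose ?S = ?S" "?S ** ?S = M" using mat_sqrt_sym[OF M] mat_sqrt(2)[OF M] by simp_all
  have Me: "M *v e = ?S *v (?S *v e)" using S(2) by (simp add: matrix_vector_mul_assoc)
  have "sqnorm_M M e = (?S *v e) \<bullet> (?S *v e)"
    unfolding sqnorm_M_def Me by (metis S(1) inner_matrix_vector_transpose)
  moreover have "(M *v e) \<bullet> (E *v (M *v e)) = (?S *v e) \<bullet> ((?S ** E ** ?S) *v (?S *v e))"
    unfolding Me using inner_congruence[of "?S *v e" ?S E] S(1) by simp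
  moreover have "sym_mat (?S ** E ** ?S)" using sym_mat_congruence[OF E, of ?S] S(1) by simp
  ultimately show ?thesis using lambda_min_le_rayleigh by simp
qed

definition sketch_W :: "real^'n^'n \<Rightarrow> real^'l^'n \<Rightarrow> real^'n^'n" where
  "sketch_W M Om = Om ** pinv (transpose Om ** M ** Om) ** transpose Om"

lemma sketch_W_projection:
  fixes M :: "real^'n^'n" and Om :: "real^'l^'n"
  assumes M: "spsd M"
  shows spsd_sketch_W: "spsd (sketch_W M Om)"
    and sketch_W_M_sketch_W: "sketch_W M Om ** M ** sketch_W M Om = sketch_W M Om"
proof -
  let ?N = "transpose Om ** M ** Om"
  have N: "spsd ?N" by (rule spsd_congruence[OF M])
  have W: "sketch_W M Om = transpose (transpose Om) ** pinv ?N ** transpose Om"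
    by (simp add: sketch_W_def)
  show "spsd (sketch_W M Om)"
    unfolding W by (rule spsd_congruence[OF pinv_sym_mat(3)]) (use N in \<open>simp_all add: spsd_def\<close>)
  have "sketch_W M Om ** M ** sketch_W M Om = Om ** (pinv ?N ** ?N ** pinv ?N) ** transpose Om"
    by (simp add: sketch_W_def matrix_mul_assoc)
  also have "pinv ?N ** ?N ** pinv ?N = pinv ?N" using N by (simp add: spsd_def pinv_sym_mat(1))
  finally show "sketch_W M Om ** M ** sketch_W M Om = sketch_W M Om" by (simp add: sketch_W_def)
qed

text \<open>With \<open>W M W = W\<close> the map \<open>e \<mapsto> W M e\<close> is an \<open>M\<close>-orthogonal projection.\<close>

lemma sqnorm_M_projection_step:
  fixes M W :: "real^'n^'n"
  assumes M: "sym_mat M" and W: "sym_mat W" "W ** M ** W = W"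
  shows "sqnorm_M M (e - W *v (M *v e)) = sqnorm_M M e - (M *v e) \<bullet> (W *v (M *v e))"
proof -
  define z where "z = W *v (M *v e)"
  have "e \<bullet> (M *v z) = (M *v e) \<bullet> z" by (rule sym_mat_inner_swap[OF M])
  moreover have "z \<bullet> (M *v z) = (M *v e) \<bullet> z"
  proof -
    have "z \<bullet> (M *v z) = (M *v e) \<bullet> (W *v (M *v z))"
      unfolding z_def by (rule sym_mat_inner_swap[OF W(1), symmetric])
    also have "W *v (M *v z) = z"
      unfolding z_def by (simp only: matrix_vector_mul_assoc matrix_mul_assoc W(2))
    finally show ?thesis .
  qed
  ultimately show ?thesis
    unfolding z_def[symmetric] sqnorm_M_def
    by (simp add: matrix_vector_mult_diff_distrib inner_diff_left inner_diff_right inner_commute)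
qed

lemma sqnorm_M_sketch_step:
  fixes M :: "real^'n^'n" and Om :: "real^'l^'n"
  assumes M: "spsd M"
  shows "sqnorm_M M (e - sketch_W M Om *v (M *v e))
      = sqnorm_M M e - (M *v e) \<bullet> (sketch_W M Om *v (M *v e))"
proof (rule sqnorm_M_projection_step)
  show "sym_mat M" "sym_mat (sketch_W M Om)"
    using M spsd_sketch_W[OF M, of Om] by (simp_all add: spsd_def)
qed (rule sketch_W_M_sketch_W[OF M])

lemma sqnorm_M_sketch_step_le:
  fixes M :: "real^'n^'n" and Om :: "real^'l^'n"
  assumes M: "spsd M"
  shows "sqnorm_M M (e - sketch_W M Om *v (M *v e)) \<le> sqnorm_M M e"
  using sqnorm_M_sketch_step[OF M, of e Om] spsd_sketch_W[OF M, of Om] by (simp add: spsd_def)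

lemma expected_sqnorm_M_sketch_step:
  fixes M :: "real^'n^'n" and D :: "(real^'l^'n) measure"
  assumes M: "spsd M" and D: "prob_space D" and W: "integrable D (sketch_W M)"
  shows "integrable D (\<lambda>Om. sqnorm_M M (e - sketch_W M Om *v (M *v e)))"
    and "(\<integral>Om. sqnorm_M M (e - sketch_W M Om *v (M *v e)) \<partial>D)
           \<le> (1 - lambda_min (mat_sqrt M ** (\<integral>Om. sketch_W M Om \<partial>D) ** mat_sqrt M)) * sqnorm_M M e"
proof -
  interpret prob_space D by (rule D)
  note quadratic = integrable_bounded_linear[OF bounded_linear_quadratic_form W]
  show "integrable D (\<lambda>Om. sqnorm_M M (e - sketch_W M Om *v (M *v e)))"
    unfolding sqnorm_M_sketch_step[OF M] using quadratic by simp
  have "sym_mat (sketch_W M Om)" for Om :: "real^'l^'n"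
    using spsd_sketch_W[OF M, of Om] by (simp add: spsd_def)
  then have "sym_mat (\<integral>Om. sketch_W M Om \<partial>D)" by (rule sym_mat_integral[OF W])
  note rayleigh = rayleigh_mat_sqrt_congruence[OF M this, of e]
  have "(\<integral>Om. sqnorm_M M (e - sketch_W M Om *v (M *v e)) \<partial>D)
      = sqnorm_M M e - (M *v e) \<bullet> ((\<integral>Om. sketch_W M Om \<partial>D) *v (M *v e))"
    unfolding sqnorm_M_sketch_step[OF M] using quadratic
    by (simp add: prob_space integral_bounded_linear[OF bounded_linear_quadratic_form W])
  then show "(\<integral>Om. sqnorm_M M (e - sketch_W M Om *v (M *v e)) \<partial>D)
           \<le> (1 - lambda_min (mat_sqrt M ** (\<integral>Om. sketch_W M Om \<partial>D) ** mat_sqrt M)) * sqnorm_M M e"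
    using rayleigh by (simp add: algebra_simps)
qed

lemma sketch_rate_nonneg:
  fixes M :: "real^'n^'n" and D :: "(real^'l^'n) measure"
  assumes M: "spd M" and D: "prob_space D" and W: "integrable D (sketch_W M)"
  shows "0 \<le> 1 - lambda_min (mat_sqrt M ** (\<integral>Om. sketch_W M Om \<partial>D) ** mat_sqrt M)"
proof -
  have M': "spsd M" using M by (rule spd_imp_spsd)
  define e where "e = (axis undefined 1 :: real^'n)"
  have "0 < sqnorm_M M e" using M by (simp add: e_def spd_def sqnorm_M_def axis_eq_0_iff)
  moreover have "0 \<le> (\<integral>Om. sqnorm_M M (e - sketch_W M Om *v (M *v e)) \<partial>D)"
    using M' by (intro Bochner_Integration.integral_nonneg) (simp add: sqnorm_M_def spsd_def)
  moreover note expected_sqnorm_M_sketch_step(2)[OF M' D W, of e]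
  ultimately show ?thesis by (smt (verit) zero_le_mult_iff)
qed

lemma sketch_project_expectation_contracts:
  fixes M :: "real^'n^'n" and D :: "(real^'l^'n) measure" and xs x0 :: "real^'n"
  assumes M: "spd M" and D: "prob_space D" and W: "integrable D (sketch_W M)"
  defines "\<rho> \<equiv> 1 - lambda_min (mat_sqrt M ** (\<integral>Om. sketch_W M Om \<partial>D) ** mat_sqrt M)"
    and "step \<equiv> \<lambda>(Om::real^'l^'n) x. x - sketch_W M Om *v (M *v (x - xs))"
    and "P \<equiv> PiM UNIV (\<lambda>_. D)"
  shows "(\<integral>\<omega>. sqnorm_M M (random_iter step x0 \<omega> (Suc k) - xs) \<partial>P)
           \<le> \<rho> * (\<integral>\<omega>. sqnorm_M M (random_iter step x0 \<omega> k - xs) \<partial>P)"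
    and "(\<integral>\<omega>. sqnorm_M M (random_iter step x0 \<omega> k - xs) \<partial>P) \<le> \<rho> ^ k * sqnorm_M M (x0 - xs)"
proof -
  have M': "spsd M" using M by (rule spd_imp_spsd)
  let ?V = "\<lambda>x. sqnorm_M M (x - xs)"
  have step_error: "step Om x - xs = (x - xs) - sketch_W M Om *v (M *v (x - xs))" for Om x
    by (simp add: step_def algebra_simps)
  have "(\<lambda>p. step (fst p) (snd p)) \<in> borel_measurable (D \<Otimes>\<^sub>M borel)"
    unfolding step_def using measurable_compose[OF measurable_fst borel_measurable_integrable[OF W]]
    by measurable
  moreover have "?V \<in> borel_measurable borel"
    unfolding sqnorm_M_def by measurable
  moreover have "0 \<le> ?V x" for x
    using M' by (simp add: spsd_def sqnorm_M_def)
  moreover have "?V (step Om x) \<le> ?V x" for Om x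
    unfolding step_error by (rule sqnorm_M_sketch_step_le[OF M'])
  moreover have "integrable D (\<lambda>Om. ?V (step Om x))" for x
    unfolding step_error by (rule expected_sqnorm_M_sketch_step(1)[OF M' D W])
  moreover have "(\<integral>Om. ?V (step Om x) \<partial>D) \<le> \<rho> * ?V x" for x
    unfolding step_error \<rho>_def by (rule expected_sqnorm_M_sketch_step(2)[OF M' D W])
  moreover have "0 \<le> \<rho>"
    unfolding \<rho>_def by (rule sketch_rate_nonneg[OF M D W])
  ultimately show "(\<integral>\<omega>. ?V (random_iter step x0 \<omega> (Suc k)) \<partial>P) \<le> \<rho> * (\<integral>\<omega>. ?V (random_iter step x0 \<omega> k) \<partial>P)"
    and "(\<integral>\<omega>. ?V (random_iter step x0 \<omega> k) \<partial>P) \<le> \<rho> ^ k * ?V x0"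
    unfolding P_def by (rule random_iter_expectation_contracts[OF D])+
qed

lemma sketch_iter_eq_random_iter:
  fixes A :: "real^'n^'m" and G :: "real^'m^'m" and \<omega> :: "nat \<Rightarrow> real^'l^'n"
  assumes "A *v xs = b"
  defines "M \<equiv> transpose A ** G ** A"
  shows "sketch_iter A b G x0 \<omega> k = random_iter (\<lambda>Om x. x - sketch_W M Om *v (M *v (x - xs))) x0 \<omega> k"
proof -
  have step: "x + (Om ** pinv (transpose Om ** transpose A ** G ** A ** Om) ** transpose Om ** transpose A ** G)
      *v (b - A *v x) = x - sketch_W M Om *v (M *v (x - xs))" for x and Om :: "real^'l^'n"
  proof -
    have "transpose Om ** transpose A ** G ** A ** Om = transpose Om ** M ** Om"
      by (simp add: M_def matrix_mul_assoc)
    moreover have "b - A *v x = (-1::real) *\<^sub>R (A *v (x - xs))"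
      using assms by (simp add: matrix_vector_mult_diff_distrib)
    ultimately show ?thesis
      unfolding sketch_W_def M_def
      by (simp only: matrix_vector_mul_assoc[symmetric] matrix_vector_mult_scaleR) simp
  qed
  show ?thesis by (induction k) (simp_all add: Let_def step)
qed

theorem mainTheorem1:
  fixes A :: "real^'n^'m" and b :: "real^'m" and xs :: "real^'n"
    and G :: "real^'m^'m" and D :: "(real^'l^'n) measure" and x0 :: "real^'n"
  assumes full_rank: "rank A = CARD('n)"
    and sol: "A *v xs = b"
    and G_spd: "spd G"
    and D_prob: "prob_space D"
    and D_sets: "sets D = sets borel"
    and W_int: "integrable D (\<lambda>Om. Om ** pinv (transpose Om ** (transpose A ** G ** A) ** Om) ** transpose Om)"
  defines "Gh \<equiv> transpose A ** G ** A"
    and "EW \<equiv> integral\<^sup>L D (\<lambda>Om. Om ** pinv (transpose Om ** (transpose A ** G ** A) ** Om) ** transpose Om)"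
    and "P \<equiv> PiM (UNIV :: nat set) (\<lambda>_. D)"
  defines "\<rho> \<equiv> 1 - lambda_min (mat_sqrt Gh ** EW ** mat_sqrt Gh)"
  shows "(\<forall>k. (\<integral>\<omega>. sqnorm_M Gh (sketch_iter A b G x0 \<omega> (Suc k) - xs) \<partial>P)
               \<le> \<rho> * (\<integral>\<omega>. sqnorm_M Gh (sketch_iter A b G x0 \<omega> k - xs) \<partial>P))
       \<and> (\<forall>k. (\<integral>\<omega>. sqnorm_M Gh (sketch_iter A b G x0 \<omega> k - xs) \<partial>P)
               \<le> \<rho> ^ k * sqnorm_M Gh (x0 - xs))
       \<and> (spd EW \<longrightarrow> \<rho> < 1)"
proof -
  have Gh: "spd Gh"
    unfolding Gh_def using G_spd full_rank by (intro spd_congruence) (simp_all add: full_rank_injective)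
  have W_eq: "sketch_W Gh = (\<lambda>Om. Om ** pinv (transpose Om ** (transpose A ** G ** A) ** Om) ** transpose Om)"
    by (simp add: fun_eq_iff sketch_W_def Gh_def)
  have W: "integrable D (sketch_W Gh)" using W_int by (simp add: W_eq)
  have \<rho>: "\<rho> = 1 - lambda_min (mat_sqrt Gh ** (\<integral>Om. sketch_W Gh Om \<partial>D) ** mat_sqrt Gh)"
    by (simp add: \<rho>_def EW_def W_eq)
  have "sketch_iter A b G x0 = random_iter (\<lambda>(Om::real^'l^'n) x. x - sketch_W Gh Om *v (Gh *v (x - xs))) x0"
    using sketch_iter_eq_random_iter[OF sol, of G x0, folded Gh_def] by (intro ext)
  moreover note sketch_project_expectation_contracts[OF Gh D_prob W, of xs x0, folded \<rho> P_def]
  moreover have "spd EW \<longrightarrow> \<rho> < 1"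
    using spd_lambda_min_pos[OF spd_mat_sqrt_congruence[OF Gh]] by (simp add: \<rho>_def)
  ultimately show ?thesis by (simp only:) blast
qed

end
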